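(* Let $c\in[0,1/2]$, $\mu\in[-1+c,1-c]^n$, $d\in\mathbb{N}$, $\beta>0$, and let $f:\{-1,1\}^n\to\{-1,1\}$ be computed by a decision tree of size $s$. Then $$\sum_{S\subseteq N:\ |\hat f(S,\mu)|\geq\beta \text{ and } |S|\leq d}\hat f^2(S,\mu)\;\geq\; 1-\Big(4(1-c/2)^d s+2^{d+2}\beta\Big).$$
   Context: $N=\{1,\ldots,n\}$. For $\mu\in[-1,1]^n$, $\mathcal{D}_\mu$ is the product distribution on $\{-1,1\}^n$ with independent coordinates and $\mathbb{E}_{x\sim\mathcal{D}_\mu}[x_i]=\mu_i$. Define $z_i(x,\mu)=(x_i-\mu_i)/\sqrt{1-\mu_i^2}$, $z_S(x,\mu)=\prod_{i\in S}z_i(x,\mu)$, and $\hat f(S,\mu)=\mathbb{E}_{x\sim\mathcal{D}_\mu}[f(x)z_S(x,\mu)]$. A decision tree over $\{-1,1\}^n$ is a rooted binary tree whose internal nodes are labeled by indices $i\in N$, with two outgoing edges labeled $1$ and $-1$, and leaves labeled $\pm1$, no index appearing twice on any root-to-leaf path; on input $x$ one follows at a node labeled $i$ the edge labeled $x_i$ and outputs the label of the leaf reached. Its size is its number of leaves. *)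

theory Defs
  imports "HOL-Analysis.Analysis"
begin

definition cube :: "nat \<Rightarrow> (nat \<Rightarrow> real) set" where
  "cube n = PiE {1..n} (\<lambda>_. {-1, 1})"

text \<open>Probability mass of x under the product distribution D_mu
  (independent coordinates, E[x_i] = mu_i).\<close>
definition prob_mu :: "nat \<Rightarrow> (nat \<Rightarrow> real) \<Rightarrow> (nat \<Rightarrow> real) \<Rightarrow> real" where
  "prob_mu n \<mu> x = (\<Prod>i\<in>{1..n}. (1 + x i * \<mu> i) / 2)"

definition expect_mu :: "nat \<Rightarrow> (nat \<Rightarrow> real) \<Rightarrow> ((nat \<Rightarrow> real) \<Rightarrow> real) \<Rightarrow> real" where
  "expect_mu n \<mu> g = (\<Sum>x\<in>cube n. prob_mu n \<mu> x * g x)"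

definition zi :: "nat \<Rightarrow> (nat \<Rightarrow> real) \<Rightarrow> (nat \<Rightarrow> real) \<Rightarrow> real" where
  "zi i x \<mu> = (x i - \<mu> i) / sqrt (1 - (\<mu> i)\<^sup>2)"

definition zS :: "nat set \<Rightarrow> (nat \<Rightarrow> real) \<Rightarrow> (nat \<Rightarrow> real) \<Rightarrow> real" where
  "zS S x \<mu> = (\<Prod>i\<in>S. zi i x \<mu>)"

definition fhat :: "nat \<Rightarrow> ((nat \<Rightarrow> real) \<Rightarrow> real) \<Rightarrow> nat set \<Rightarrow> (nat \<Rightarrow> real) \<Rightarrow> real" where
  "fhat n f S \<mu> = expect_mu n \<mu> (\<lambda>x. f x * zS S x \<mu>)"

datatype dtree = Leaf real | Node nat dtree dtree

fun dt_eval :: "dtree \<Rightarrow> (nat \<Rightarrow> real) \<Rightarrow> real" where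
  "dt_eval (Leaf b) x = b"
| "dt_eval (Node i t1 tm) x = (if x i = 1 then dt_eval t1 x else dt_eval tm x)"

fun dt_size :: "dtree \<Rightarrow> nat" where
  "dt_size (Leaf b) = 1"
| "dt_size (Node i t1 tm) = dt_size t1 + dt_size tm"

fun dt_wf :: "nat \<Rightarrow> nat set \<Rightarrow> dtree \<Rightarrow> bool" where
  "dt_wf n U (Leaf b) = (b \<in> {-1, 1})"
| "dt_wf n U (Node i t1 tm) = (i \<in> {1..n} \<and> i \<notin> U \<and>
      dt_wf n (insert i U) t1 \<and> dt_wf n (insert i U) tm)"

definition computed_by_dt_of_size :: "nat \<Rightarrow> ((nat \<Rightarrow> real) \<Rightarrow> real) \<Rightarrow> nat \<Rightarrow> bool" where
  "computed_by_dt_of_size n f s = (\<exists>T. dt_wf n {} T \<and> dt_size T = s \<and>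
      (\<forall>x\<in>cube n. f x = dt_eval T x))"

end

theory Submission
  imports Defs
begin

text \<open>Split the leaves of the tree at depth \<open>d\<close>. The shallow leaves give a function \<open>g\<close> whose
  \<open>\<mu>\<close>-biased Fourier coefficients vanish above level \<open>d\<close> and have absolute sum at most \<open>2^d\<close>:
  the indicator of a path with variables \<open>D\<close> has spectral norm \<open>\<Prod>i\<in>D. (\<sigma>\<^sub>i + 1 \<plusminus> \<mu>\<^sub>i) / 2\<close>
  with \<open>\<sigma>\<^sub>i = sqrt (1 - \<mu>\<^sub>i\<^sup>2) \<le> 1\<close>, and the two weights at a node add up to at most 2.
  The deep leaves give \<open>r = f - g\<close> with \<open>r\<^sup>2\<close> bounded by the probability of reaching a deep leaf;
  each such leaf is reached with probability at most \<open>(1 - c/2)^d\<close>, so by Parseval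
  \<open>\<Sum> r\<^sup>2 \<le> s (1 - c/2)^d\<close>, while \<open>\<Sum> f\<^sup>2 = 1\<close>. On a coefficient that is light or of high degree,
  \<open>f\<^sup>2 = f g + f r \<le> \<beta> |g| + (f\<^sup>2 + r\<^sup>2) / 2\<close>; summing over these coefficients gives the bound.\<close>

section \<open>Expectations under the product distribution\<close>

lemma cube_memberD: "x \<in> cube n \<Longrightarrow> i \<in> {1..n} \<Longrightarrow> x i = 1 \<or> x i = -1"
  unfolding cube_def by (auto simp: PiE_def Pi_def)

lemma finite_cube: "finite (cube n)"
  unfolding cube_def by (intro finite_PiE) auto

definition bit_expect :: "real \<Rightarrow> (real \<Rightarrow> real) \<Rightarrow> real" where
  "bit_expect m h = (1 + m) / 2 * h 1 + (1 - m) / 2 * h (-1)"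

lemma expect_mu_prod:
  "expect_mu n \<mu> (\<lambda>x. \<Prod>i\<in>{1..n}. h i (x i)) = (\<Prod>i\<in>{1..n}. bit_expect (\<mu> i) (h i))"
proof -
  have "expect_mu n \<mu> (\<lambda>x. \<Prod>i\<in>{1..n}. h i (x i)) =
        (\<Sum>x\<in>cube n. \<Prod>i\<in>{1..n}. (1 + x i * \<mu> i) / 2 * h i (x i))"
    unfolding expect_mu_def prob_mu_def prod.distrib by simp
  also have "\<dots> = (\<Prod>i\<in>{1..n}. \<Sum>t\<in>{-1, 1}. (1 + t * \<mu> i) / 2 * h i t)"
    unfolding cube_def by (rule prod_sum_PiE[symmetric]) auto
  also have "\<dots> = (\<Prod>i\<in>{1..n}. bit_expect (\<mu> i) (h i))"
    by (simp add: bit_expect_def algebra_simps)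
  finally show ?thesis .
qed

lemma expect_mu_const_one: "expect_mu n \<mu> (\<lambda>x. 1) = 1"
  using expect_mu_prod[of n \<mu> "\<lambda>_ _. 1"] by (simp add: bit_expect_def field_simps)

lemma expect_mu_add: "expect_mu n \<mu> (\<lambda>x. u x + v x) = expect_mu n \<mu> u + expect_mu n \<mu> v"
  unfolding expect_mu_def by (simp add: algebra_simps sum.distrib)

lemma expect_mu_cong: "(\<And>x. x \<in> cube n \<Longrightarrow> u x = v x) \<Longrightarrow> expect_mu n \<mu> u = expect_mu n \<mu> v"
  unfolding expect_mu_def by (intro sum.cong) auto

lemma prob_mu_pos:
  assumes "\<forall>i\<in>{1..n}. \<bar>\<mu> i\<bar> < 1" "x \<in> cube n"
  shows "prob_mu n \<mu> x > 0"
  unfolding prob_mu_def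
proof (intro prod_pos)
  fix i assume "i \<in> {1..n}"
  then have "x i = 1 \<or> x i = -1" "\<bar>\<mu> i\<bar> < 1"
    using assms cube_memberD by blast+
  then show "(1 + x i * \<mu> i) / 2 > 0" by (auto simp: abs_less_iff)
qed

lemma expect_mu_mono:
  assumes "\<forall>i\<in>{1..n}. \<bar>\<mu> i\<bar> < 1" "\<And>x. x \<in> cube n \<Longrightarrow> u x \<le> v x"
  shows "expect_mu n \<mu> u \<le> expect_mu n \<mu> v"
  unfolding expect_mu_def using prob_mu_pos[OF assms(1)] assms(2)
  by (intro sum_mono mult_left_mono) (auto intro: less_imp_le)

lemma fhat_empty: "fhat n u {} \<mu> = expect_mu n \<mu> u"
  by (simp add: fhat_def zS_def)

lemma fhat_add: "fhat n (\<lambda>x. u x + v x) S \<mu> = fhat n u S \<mu> + fhat n v S \<mu>"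
  unfolding fhat_def by (simp add: distrib_right expect_mu_add)

lemma fhat_cmult: "fhat n (\<lambda>x. c * u x) S \<mu> = c * fhat n u S \<mu>"
  unfolding fhat_def expect_mu_def by (simp add: sum_distrib_left mult_ac)

lemma fhat_cong: "(\<And>x. x \<in> cube n \<Longrightarrow> u x = v x) \<Longrightarrow> fhat n u S \<mu> = fhat n v S \<mu>"
  unfolding fhat_def by (rule expect_mu_cong) simp

section \<open>Parseval's identity\<close>

lemma zi_mult_zi_add_one:
  assumes "\<bar>\<mu> i\<bar> < 1" "x i = 1 \<or> x i = -1" "y i = 1 \<or> y i = -1"
  shows "zi i x \<mu> * zi i y \<mu> + 1 = (if x i = y i then 2 / (1 + x i * \<mu> i) else 0)"
proof -
  have "(\<mu> i)\<^sup>2 < 1"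
    using assms(1) by (simp add: abs_square_less_1)
  then have nz: "1 - (\<mu> i)\<^sup>2 > 0" "1 + \<mu> i \<noteq> 0" "1 - \<mu> i \<noteq> 0"
    using assms(1) by (auto simp: abs_less_iff)
  have "zi i x \<mu> * zi i y \<mu> = (x i - \<mu> i) * (y i - \<mu> i) / (sqrt (1 - (\<mu> i)\<^sup>2))\<^sup>2"
    by (simp add: zi_def power2_eq_square)
  also have "\<dots> = (x i - \<mu> i) * (y i - \<mu> i) / (1 - (\<mu> i)\<^sup>2)"
    using nz(1) by simp
  finally have zz: "zi i x \<mu> * zi i y \<mu> = (x i - \<mu> i) * (y i - \<mu> i) / (1 - (\<mu> i)\<^sup>2)" .
  show ?thesis
    unfolding zz using assms(2,3) nz by (auto simp: field_simps power2_eq_square)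
qed

lemma sum_zS_mult_zS:
  assumes mu: "\<forall>i\<in>{1..n}. \<bar>\<mu> i\<bar> < 1" and x: "x \<in> cube n" and y: "y \<in> cube n"
  shows "(\<Sum>S\<in>Pow {1..n}. zS S x \<mu> * zS S y \<mu>) = (if x = y then 1 / prob_mu n \<mu> x else 0)"
proof -
  have "(\<Sum>S\<in>Pow {1..n}. zS S x \<mu> * zS S y \<mu>) = (\<Prod>i\<in>{1..n}. zi i x \<mu> * zi i y \<mu> + 1)"
    by (simp add: prod_add zS_def prod.distrib)
  also have "\<dots> = (\<Prod>i\<in>{1..n}. if x i = y i then 2 / (1 + x i * \<mu> i) else 0)"
    using mu cube_memberD[OF x] cube_memberD[OF y] by (intro prod.cong refl zi_mult_zi_add_one) auto
  also have "\<dots> = (if x = y then 1 / prob_mu n \<mu> x else 0)"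
  proof (cases "x = y")
    case True
    then show ?thesis by (simp add: prob_mu_def prod_dividef)
  next
    case False
    then obtain i where "i \<in> {1..n}" "x i \<noteq> y i"
      using x y unfolding cube_def by (metis PiE_ext)
    then show ?thesis using False by (auto intro: prod_zero)
  qed
  finally show ?thesis .
qed

lemma parseval:
  assumes mu: "\<forall>i\<in>{1..n}. \<bar>\<mu> i\<bar> < 1"
  shows "(\<Sum>S\<in>Pow {1..n}. fhat n u S \<mu> * fhat n v S \<mu>) = expect_mu n \<mu> (\<lambda>x. u x * v x)"
proof -
  define p where "p = prob_mu n \<mu>"
  have "(\<Sum>S\<in>Pow {1..n}. fhat n u S \<mu> * fhat n v S \<mu>) =
     (\<Sum>S\<in>Pow {1..n}. \<Sum>x\<in>cube n. \<Sum>y\<in>cube n.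
        (p x * u x) * (p y * v y) * (zS S x \<mu> * zS S y \<mu>))"
    unfolding fhat_def expect_mu_def p_def by (simp add: sum_product mult_ac)
  also have "\<dots> = (\<Sum>x\<in>cube n. \<Sum>y\<in>cube n. (p x * u x) * (p y * v y) *
        (\<Sum>S\<in>Pow {1..n}. zS S x \<mu> * zS S y \<mu>))"
    unfolding sum_distrib_left by (subst sum.swap, rule sum.cong[OF refl], rule sum.swap)
  also have "\<dots> = (\<Sum>x\<in>cube n. p x * (u x * v x))"
  proof (rule sum.cong[OF refl])
    fix x assume x: "x \<in> cube n"
    have "(\<Sum>y\<in>cube n. (p x * u x) * (p y * v y) * (\<Sum>S\<in>Pow {1..n}. zS S x \<mu> * zS S y \<mu>))
        = (\<Sum>y\<in>cube n. if x = y then (p x * u x) * (p x * v x) / p x else 0)"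
      by (intro sum.cong refl, unfold sum_zS_mult_zS[OF mu x]) (simp_all add: p_def)
    also have "\<dots> = p x * (u x * v x)"
      using x prob_mu_pos[OF mu x] finite_cube by (simp add: p_def)
    finally show "(\<Sum>y\<in>cube n. (p x * u x) * (p y * v y) * (\<Sum>S\<in>Pow {1..n}. zS S x \<mu> * zS S y \<mu>))
        = p x * (u x * v x)" .
  qed
  finally show ?thesis unfolding expect_mu_def p_def .
qed

lemma sum_fhat_sq_boolean:
  assumes "\<forall>i\<in>{1..n}. \<bar>\<mu> i\<bar> < 1" "\<forall>x\<in>cube n. f x \<in> {-1, 1}"
  shows "(\<Sum>S\<in>Pow {1..n}. (fhat n f S \<mu>)\<^sup>2) = 1"
proof -
  have "(\<Sum>S\<in>Pow {1..n}. (fhat n f S \<mu>)\<^sup>2) = expect_mu n \<mu> (\<lambda>x. f x * f x)"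
    using parseval[OF assms(1)] by (simp add: power2_eq_square)
  also have "\<dots> = expect_mu n \<mu> (\<lambda>x. 1)"
    using assms(2) by (intro expect_mu_cong) auto
  finally show ?thesis by (simp add: expect_mu_const_one)
qed

section \<open>Fourier coefficients of subcube indicators\<close>

text \<open>For \<open>a\<close> and \<open>x\<close> with values \<open>\<plusminus>1\<close> on \<open>D\<close>, this is the indicator of \<open>\<forall>i\<in>D. x i = a i\<close>.\<close>

definition subcube_ind :: "nat set \<Rightarrow> (nat \<Rightarrow> real) \<Rightarrow> (nat \<Rightarrow> real) \<Rightarrow> real" where
  "subcube_ind D a x = (\<Prod>i\<in>D. (1 + a i * x i) / 2)"

lemma subcube_ind_nonneg:
  assumes "\<forall>i\<in>D. a i = 1 \<or> a i = -1" "\<forall>i\<in>D. x i = 1 \<or> x i = -1"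
  shows "subcube_ind D a x \<ge> 0"
  unfolding subcube_ind_def
proof (rule prod_nonneg)
  fix i assume "i \<in> D"
  then have "a i = 1 \<or> a i = -1" "x i = 1 \<or> x i = -1" using assms by blast+
  then show "(1 + a i * x i) / 2 \<ge> 0" by auto
qed

lemma bit_expect_coordinate:
  fixes inD inS :: bool
  assumes "\<bar>m\<bar> < 1" "inD \<longrightarrow> a = 1 \<or> a = -1"
  shows "bit_expect m (\<lambda>t. (if inD then (1 + a * t) / 2 else 1) * (if inS then (t - m) / sqrt (1 - m\<^sup>2) else 1))
    = (if inS then (if inD then a * sqrt (1 - m\<^sup>2) / 2 else 0) else if inD then (1 + a * m) / 2 else 1)"
proof -
  have "m\<^sup>2 < 1" using assms(1) by (simp add: abs_square_less_1)
  then have "sqrt (1 - m\<^sup>2) * sqrt (1 - m\<^sup>2) = (1 + m) * (1 - m)" "sqrt (1 - m\<^sup>2) > 0"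
    by (simp_all add: power2_eq_square algebra_simps)
  with assms(2) show ?thesis
    by (cases inD; cases inS) (auto simp: bit_expect_def field_simps)
qed

text \<open>By independence the coefficient factorises over the coordinates; a coordinate of \<open>S\<close>
  outside \<open>D\<close> contributes the mean of \<open>z\<^sub>i\<close>, which is \<open>0\<close>.\<close>

lemma fhat_subcube_ind:
  assumes mu: "\<forall>i\<in>{1..n}. \<bar>\<mu> i\<bar> < 1" and D: "D \<subseteq> {1..n}" and S: "S \<subseteq> {1..n}"
    and a: "\<forall>i\<in>D. a i = 1 \<or> a i = -1"
  shows "fhat n (subcube_ind D a) S \<mu> =
    (if S \<subseteq> D then (\<Prod>i\<in>D-S. (1 + a i * \<mu> i) / 2) * (\<Prod>i\<in>S. a i * sqrt (1 - (\<mu> i)\<^sup>2) / 2)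
     else 0)"
proof -
  define h where "h i = (\<lambda>t. (if i \<in> D then (1 + a i * t) / 2 else 1) *
      (if i \<in> S then (t - \<mu> i) / sqrt (1 - (\<mu> i)\<^sup>2) else 1))" for i
  define e where "e i = (if i \<in> S then (if i \<in> D then a i * sqrt (1 - (\<mu> i)\<^sup>2) / 2 else 0)
      else if i \<in> D then (1 + a i * \<mu> i) / 2 else 1)" for i
  have restrict: "{1..n} \<inter> D = D" "{1..n} \<inter> S = S" "{1..n} \<inter> (D - S) = D - S"
    using D S by auto
  have "(\<Prod>i\<in>{1..n}. h i (x i)) = subcube_ind D a x * zS S x \<mu>" for x
    unfolding h_def prod.distrib prod.inter_restrict[OF finite_atLeastAtMost, symmetric] restrict
    by (simp add: subcube_ind_def zS_def zi_def)
  then have "fhat n (subcube_ind D a) S \<mu> = expect_mu n \<mu> (\<lambda>x. \<Prod>i\<in>{1..n}. h i (x i))"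
    by (simp add: fhat_def)
  also have "\<dots> = (\<Prod>i\<in>{1..n}. bit_expect (\<mu> i) (h i))"
    by (rule expect_mu_prod)
  also have "\<dots> = (\<Prod>i\<in>{1..n}. e i)"
    unfolding h_def e_def using mu a by (intro prod.cong refl bit_expect_coordinate) auto
  also have "\<dots> = (if S \<subseteq> D then (\<Prod>i\<in>D-S. (1 + a i * \<mu> i) / 2) * (\<Prod>i\<in>S. a i * sqrt (1 - (\<mu> i)\<^sup>2) / 2)
     else 0)"
  proof (cases "S \<subseteq> D")
    case True
    then have "(\<Prod>i\<in>{1..n}. e i) = (\<Prod>i\<in>{1..n}. if i \<in> D - S then (1 + a i * \<mu> i) / 2 else 1) *
        (\<Prod>i\<in>{1..n}. if i \<in> S then a i * sqrt (1 - (\<mu> i)\<^sup>2) / 2 else 1)"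
      unfolding e_def prod.distrib[symmetric] by (intro prod.cong) auto
    also have "\<dots> = (\<Prod>i\<in>D-S. (1 + a i * \<mu> i) / 2) * (\<Prod>i\<in>S. a i * sqrt (1 - (\<mu> i)\<^sup>2) / 2)"
      unfolding prod.inter_restrict[OF finite_atLeastAtMost, symmetric] restrict ..
    finally show ?thesis using True by simp
  next
    case False
    then obtain i where "i \<in> S - D" by blast
    then have "e i = 0" "i \<in> {1..n}" using S unfolding e_def by auto
    then show ?thesis using False by (auto intro: prod_zero)
  qed
  finally show ?thesis .
qed

lemma sum_abs_fhat_subcube_ind:
  assumes mu: "\<forall>i\<in>{1..n}. \<bar>\<mu> i\<bar> < 1" and D: "D \<subseteq> {1..n}"
    and a: "\<forall>i\<in>D. a i = 1 \<or> a i = -1"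
  shows "(\<Sum>S\<in>Pow {1..n}. \<bar>fhat n (subcube_ind D a) S \<mu>\<bar>) =
         (\<Prod>i\<in>D. (sqrt (1 - (\<mu> i)\<^sup>2) + 1 + a i * \<mu> i) / 2)"
proof -
  define \<sigma> where "\<sigma> i = sqrt (1 - (\<mu> i)\<^sup>2) / 2" for i
  define \<pi> where "\<pi> i = (1 + a i * \<mu> i) / 2" for i
  have PowD: "Pow {1..n} \<inter> Pow D = Pow D"
    using D by auto
  have \<pi>_nonneg: "\<pi> i \<ge> 0" and abs_\<sigma>: "\<bar>a i * sqrt (1 - (\<mu> i)\<^sup>2) / 2\<bar> = \<sigma> i"
    if "i \<in> D" for i
  proof -
    have "a i = 1 \<or> a i = -1" "\<bar>\<mu> i\<bar> < 1" using a mu D that by auto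
    moreover from this have "(\<mu> i)\<^sup>2 \<le> 1" by (simp add: abs_square_le_1)
    ultimately show "\<pi> i \<ge> 0" "\<bar>a i * sqrt (1 - (\<mu> i)\<^sup>2) / 2\<bar> = \<sigma> i"
      unfolding \<pi>_def \<sigma>_def by (auto simp: abs_less_iff)
  qed
  have "(\<Sum>S\<in>Pow {1..n}. \<bar>fhat n (subcube_ind D a) S \<mu>\<bar>) =
      (\<Sum>S\<in>Pow {1..n}. if S \<in> Pow D then prod \<sigma> S * prod \<pi> (D - S) else 0)"
  proof (rule sum.cong[OF refl])
    fix S assume "S \<in> Pow {1..n}"
    moreover have "\<bar>prod \<pi> (D - S)\<bar> = prod \<pi> (D - S)"
      using \<pi>_nonneg by (intro abs_of_nonneg prod_nonneg) auto
    moreover have "\<bar>\<Prod>i\<in>S. a i * sqrt (1 - (\<mu> i)\<^sup>2) / 2\<bar> = prod \<sigma> S" if "S \<subseteq> D"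
      unfolding abs_prod using abs_\<sigma> that by (intro prod.cong) auto
    ultimately show "\<bar>fhat n (subcube_ind D a) S \<mu>\<bar> =
        (if S \<in> Pow D then prod \<sigma> S * prod \<pi> (D - S) else 0)"
      using fhat_subcube_ind[OF mu D _ a, of S] by (auto simp: \<pi>_def abs_mult mult.commute)
  qed
  also have "\<dots> = (\<Sum>S\<in>Pow {1..n} \<inter> Pow D. prod \<sigma> S * prod \<pi> (D - S))"
    by (simp add: sum.inter_restrict)
  also have "\<dots> = (\<Sum>S\<in>Pow D. prod \<sigma> S * prod \<pi> (D - S))"
    unfolding PowD ..
  also have "\<dots> = (\<Prod>i\<in>D. \<sigma> i + \<pi> i)"
    using finite_subset[OF D finite_atLeastAtMost] by (rule prod_add[symmetric])
  finally show ?thesis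
    by (simp add: \<sigma>_def \<pi>_def add_divide_distrib add.assoc)
qed

lemma sqrt_one_minus_square_weights:
  fixes m :: real
  assumes "\<bar>m\<bar> < 1"
  shows "0 \<le> (sqrt (1 - m\<^sup>2) + 1 + m) / 2" "0 \<le> (sqrt (1 - m\<^sup>2) + 1 - m) / 2"
    "(sqrt (1 - m\<^sup>2) + 1 + m) / 2 + (sqrt (1 - m\<^sup>2) + 1 - m) / 2 \<le> 2"
proof -
  define s where "s = sqrt (1 - m\<^sup>2)"
  have "0 \<le> s" "s \<le> 1" "-1 < m" "m < 1"
    using assms by (auto simp: s_def abs_square_le_1 abs_less_iff abs_le_iff)
  then show "0 \<le> (sqrt (1 - m\<^sup>2) + 1 + m) / 2" "0 \<le> (sqrt (1 - m\<^sup>2) + 1 - m) / 2"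
    "(sqrt (1 - m\<^sup>2) + 1 + m) / 2 + (sqrt (1 - m\<^sup>2) + 1 - m) / 2 \<le> 2"
    unfolding s_def[symmetric] by (auto simp: field_simps)
qed

lemma expect_subcube_ind_le:
  assumes mu: "\<forall>i\<in>{1..n}. \<bar>\<mu> i\<bar> < 1" and D: "D \<subseteq> {1..n}"
    and a: "\<forall>i\<in>D. a i = 1 \<or> a i = -1" and c: "\<forall>i\<in>D. \<bar>\<mu> i\<bar> \<le> 1 - c"
  shows "expect_mu n \<mu> (subcube_ind D a) \<le> (1 - c / 2) ^ card D"
proof -
  have "expect_mu n \<mu> (subcube_ind D a) = (\<Prod>i\<in>D. (1 + a i * \<mu> i) / 2)"
    using fhat_subcube_ind[OF mu D _ a, of "{}"] by (simp add: fhat_empty)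
  also have "\<dots> \<le> (\<Prod>i\<in>D. 1 - c / 2)"
  proof (rule prod_mono)
    fix i assume "i \<in> D"
    then have "a i = 1 \<or> a i = -1" "\<bar>\<mu> i\<bar> < 1" "\<bar>\<mu> i\<bar> \<le> 1 - c" using a mu D c by auto
    then show "0 \<le> (1 + a i * \<mu> i) / 2 \<and> (1 + a i * \<mu> i) / 2 \<le> 1 - c / 2"
      by (auto simp: abs_le_iff abs_less_iff)
  qed
  finally show ?thesis by simp
qed

section \<open>Decision trees as sums over their leaves\<close>

definition extend_path :: "nat \<Rightarrow> real \<Rightarrow> nat set \<times> (nat \<Rightarrow> real) \<times> real \<Rightarrow> nat set \<times> (nat \<Rightarrow> real) \<times> real"
  where "extend_path i t = (\<lambda>(D, a, b). (insert i D, a(i := t), b))"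

text \<open>One entry \<open>(D, a, b)\<close> per leaf: \<open>D\<close> is the set of variables queried on the way to the leaf,
  \<open>a\<close> gives their values along that path, and \<open>b\<close> is the label of the leaf.\<close>

fun dt_paths :: "dtree \<Rightarrow> (nat set \<times> (nat \<Rightarrow> real) \<times> real) list" where
  "dt_paths (Leaf b) = [({}, \<lambda>_. 0, b)]"
| "dt_paths (Node i t1 t2) = map (extend_path i 1) (dt_paths t1) @ map (extend_path i (-1)) (dt_paths t2)"

lemma length_dt_paths: "length (dt_paths T) = dt_size T"
  by (induction T) auto

lemma dt_size_pos: "dt_size T \<ge> 1"
  by (induction T) auto

lemma dt_eval_wf: "dt_wf n U T \<Longrightarrow> dt_eval T x \<in> {-1, 1}"
  by (induction T arbitrary: U) auto

lemma dt_paths_wf: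
  assumes "dt_wf n U T" "(D, a, b) \<in> set (dt_paths T)"
  shows "D \<subseteq> {1..n} \<and> D \<inter> U = {} \<and> (\<forall>i\<in>D. a i = 1 \<or> a i = -1) \<and> (b = 1 \<or> b = -1)"
  using assms
proof (induction T arbitrary: U D a b)
  case (Leaf x)
  then show ?case by auto
next
  case (Node i t1 t2)
  then have "dt_wf n (insert i U) t1" "dt_wf n (insert i U) t2" "i \<in> {1..n}" "i \<notin> U" by auto
  with Node.IH Node.prems(2) show ?case by (fastforce simp: extend_path_def)
qed

lemma dt_paths_Node_fresh:
  assumes "dt_wf n U (Node i t1 t2)"
  shows "\<forall>(D, a, b)\<in>set (dt_paths t1). finite D \<and> i \<notin> D"
    and "\<forall>(D, a, b)\<in>set (dt_paths t2). finite D \<and> i \<notin> D"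
proof -
  have fresh: "finite D \<and> i \<notin> D" if "dt_wf n (insert i U) t" "(D, a, b) \<in> set (dt_paths t)" for t D a b
  proof -
    from dt_paths_wf[OF that] have "D \<subseteq> {1..n}" "D \<inter> insert i U = {}" by auto
    then show ?thesis using finite_subset[OF _ finite_atLeastAtMost] by blast
  qed
  have "dt_wf n (insert i U) t1" "dt_wf n (insert i U) t2" using assms by auto
  then show "\<forall>(D, a, b)\<in>set (dt_paths t1). finite D \<and> i \<notin> D"
    and "\<forall>(D, a, b)\<in>set (dt_paths t2). finite D \<and> i \<notin> D"
    using fresh by auto
qed

lemma sum_list_extend_paths:
  fixes q :: "nat \<Rightarrow> real \<Rightarrow> real" and w :: "real \<Rightarrow> real"
  assumes "\<forall>(D, a, b)\<in>set ps. finite D \<and> i \<notin> D"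
  shows "(\<Sum>(D, a, b)\<leftarrow>map (extend_path i t) ps. w b * (\<Prod>j\<in>D. q j (a j)))
       = q i t * (\<Sum>(D, a, b)\<leftarrow>ps. w b * (\<Prod>j\<in>D. q j (a j)))"
proof -
  have upd: "(\<Prod>j\<in>D. q j (if j = i then t else a j)) = (\<Prod>j\<in>D. q j (a j))" if "i \<notin> D" for D a
    using that by (intro prod.cong) auto
  from assms show ?thesis
    by (induction ps) (auto simp: extend_path_def upd algebra_simps)
qed

lemma filter_card_extend_paths:
  assumes "\<forall>(D, a, b)\<in>set ps. finite D \<and> i \<notin> D"
  shows "filter (\<lambda>p. card (fst p) \<le> Suc k) (map (extend_path i t) ps)
       = map (extend_path i t) (filter (\<lambda>p. card (fst p) \<le> k) ps)"
  using assms by (induction ps) (auto simp: extend_path_def)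

lemma sum_dt_paths_subcube_ind:
  assumes "dt_wf n U T" "\<forall>i\<in>{1..n}. x i = 1 \<or> x i = -1"
  shows "(\<Sum>(D, a, b)\<leftarrow>dt_paths T. w b * subcube_ind D a x) = w (dt_eval T x)"
  using assms(1)
proof (induction T arbitrary: U)
  case (Leaf b)
  then show ?case by (simp add: subcube_ind_def)
next
  case (Node i t1 t2)
  have wf: "dt_wf n (insert i U) t1" "dt_wf n (insert i U) t2" and "i \<in> {1..n}"
    using Node.prems by auto
  note fresh = dt_paths_Node_fresh[OF Node.prems]
  have "(\<Sum>(D, a, b)\<leftarrow>dt_paths (Node i t1 t2). w b * subcube_ind D a x) =
      (1 + 1 * x i) / 2 * (\<Sum>(D, a, b)\<leftarrow>dt_paths t1. w b * subcube_ind D a x) +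
      (1 + -1 * x i) / 2 * (\<Sum>(D, a, b)\<leftarrow>dt_paths t2. w b * subcube_ind D a x)"
    unfolding dt_paths.simps map_append sum_list_append subcube_ind_def
      sum_list_extend_paths[OF fresh(1), where q = "\<lambda>j t. (1 + t * x j) / 2"]
      sum_list_extend_paths[OF fresh(2), where q = "\<lambda>j t. (1 + t * x j) / 2"] ..
  also have "\<dots> = w (dt_eval (Node i t1 t2) x)"
    using assms(2) \<open>i \<in> {1..n}\<close> Node.IH(1)[OF wf(1)] Node.IH(2)[OF wf(2)] by auto
  finally show ?case .
qed

lemma subcube_ind_dt_path_nonneg:
  assumes "dt_wf n U T" "(D, a, b) \<in> set (dt_paths T)" "x \<in> cube n"
  shows "0 \<le> subcube_ind D a x"
proof (rule subcube_ind_nonneg)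
  have "D \<subseteq> {1..n}" "\<forall>i\<in>D. a i = 1 \<or> a i = -1"
    using dt_paths_wf[OF assms(1,2)] by auto
  then show "\<forall>i\<in>D. a i = 1 \<or> a i = -1" "\<forall>i\<in>D. x i = 1 \<or> x i = -1"
    using cube_memberD[OF assms(3)] by blast+
qed

lemma sum_list_filter_add_filter_not:
  fixes f :: "'a \<Rightarrow> 'b::comm_monoid_add"
  shows "(\<Sum>p\<leftarrow>filter P ps. f p) + (\<Sum>p\<leftarrow>filter (\<lambda>p. \<not> P p) ps. f p) = (\<Sum>p\<leftarrow>ps. f p)"
  by (induction ps) (simp_all add: ac_simps)

text \<open>On the cube, \<open>leaf_sum P w T x\<close> is \<open>w (dt_eval T x)\<close> if the path followed by \<open>x\<close> queries a
  set of variables satisfying \<open>P\<close>, and \<open>0\<close> otherwise.\<close>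

definition leaf_sum :: "(nat set \<Rightarrow> bool) \<Rightarrow> (real \<Rightarrow> real) \<Rightarrow> dtree \<Rightarrow> (nat \<Rightarrow> real) \<Rightarrow> real" where
  "leaf_sum P w T x = (\<Sum>(D, a, b)\<leftarrow>filter (\<lambda>p. P (fst p)) (dt_paths T). w b * subcube_ind D a x)"

lemma leaf_sum_add_leaf_sum_not:
  assumes "dt_wf n U T" "\<forall>i\<in>{1..n}. x i = 1 \<or> x i = -1"
  shows "leaf_sum P w T x + leaf_sum (\<lambda>D. \<not> P D) w T x = w (dt_eval T x)"
  unfolding leaf_sum_def sum_list_filter_add_filter_not sum_dt_paths_subcube_ind[OF assms] ..

lemma leaf_sum_nonneg:
  assumes "dt_wf n U T" "x \<in> cube n" "\<forall>b. 0 \<le> w b"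
  shows "0 \<le> leaf_sum P w T x"
  unfolding leaf_sum_def
  using assms subcube_ind_dt_path_nonneg[OF assms(1) _ assms(2)]
  by (intro sum_list_nonneg) auto

lemma leaf_sum_sq_le:
  assumes T: "dt_wf n U T" and x: "x \<in> cube n"
  shows "(leaf_sum P (\<lambda>b. b) T x)\<^sup>2 \<le> leaf_sum P (\<lambda>_. 1) T x"
proof -
  let ?r = "leaf_sum P (\<lambda>b. b) T x" and ?m = "leaf_sum P (\<lambda>_. 1) T x"
  have "\<bar>?r\<bar> \<le> ?m"
    unfolding leaf_sum_def
  proof (rule order_trans[OF sum_list_abs], unfold map_map, rule sum_list_mono)
    fix p assume "p \<in> set (filter (\<lambda>p. P (fst p)) (dt_paths T))"
    moreover obtain D a b where "p = (D, a, b)" by (cases p)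
    ultimately have p: "p = (D, a, b)" "(D, a, b) \<in> set (dt_paths T)" by auto
    then have "b = 1 \<or> b = -1" "0 \<le> subcube_ind D a x"
      using dt_paths_wf[OF T p(2)] subcube_ind_dt_path_nonneg[OF T p(2) x] by auto
    then show "(abs \<circ> (\<lambda>(D, a, b). b * subcube_ind D a x)) p \<le> (\<lambda>(D, a, b). 1 * subcube_ind D a x) p"
      using p(1) by auto
  qed
  moreover have "?m \<le> 1"
  proof -
    have "\<forall>i\<in>{1..n}. x i = 1 \<or> x i = -1" using cube_memberD[OF x] by blast
    then have "?m + leaf_sum (\<lambda>D. \<not> P D) (\<lambda>_. 1) T x = 1"
      using leaf_sum_add_leaf_sum_not[OF T] by simp
    moreover have "0 \<le> leaf_sum (\<lambda>D. \<not> P D) (\<lambda>_. 1) T x"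
      by (rule leaf_sum_nonneg[OF T x]) simp
    ultimately show ?thesis by linarith
  qed
  ultimately have "\<bar>?r\<bar> * \<bar>?r\<bar> \<le> ?m * 1"
    by (intro mult_mono) auto
  then show ?thesis by (simp add: power2_eq_square abs_mult_self_eq)
qed

lemma fhat_leaf_sum:
  "fhat n (leaf_sum P w T) S \<mu> =
    (\<Sum>(D, a, b)\<leftarrow>filter (\<lambda>p. P (fst p)) (dt_paths T). w b * fhat n (subcube_ind D a) S \<mu>)"
proof -
  have "fhat n (\<lambda>x. \<Sum>(D, a, b)\<leftarrow>ps. w b * subcube_ind D a x) S \<mu> =
      (\<Sum>(D, a, b)\<leftarrow>ps. w b * fhat n (subcube_ind D a) S \<mu>)" for ps
  proof (induction ps)
    case Nil
    then show ?case by (simp add: fhat_def expect_mu_def)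
  next
    case (Cons p ps)
    then show ?case by (cases p) (simp add: fhat_add fhat_cmult)
  qed
  then show ?thesis unfolding leaf_sum_def[abs_def] .
qed

lemma fhat_dt_eval_split:
  assumes "dt_wf n U T"
  shows "fhat n (dt_eval T) S \<mu> =
    fhat n (leaf_sum P (\<lambda>b. b) T) S \<mu> + fhat n (leaf_sum (\<lambda>D. \<not> P D) (\<lambda>b. b) T) S \<mu>"
proof -
  have "fhat n (dt_eval T) S \<mu> =
      fhat n (\<lambda>x. leaf_sum P (\<lambda>b. b) T x + leaf_sum (\<lambda>D. \<not> P D) (\<lambda>b. b) T x) S \<mu>"
    using leaf_sum_add_leaf_sum_not[OF assms] cube_memberD by (intro fhat_cong) auto
  then show ?thesis by (simp only: fhat_add)
qed

section \<open>The shallow part of a decision tree\<close>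

lemma fhat_leaf_sum_shallow_eq_0:
  assumes mu: "\<forall>i\<in>{1..n}. \<bar>\<mu> i\<bar> < 1" and T: "dt_wf n U T"
    and S: "S \<subseteq> {1..n}" "d < card S"
  shows "fhat n (leaf_sum (\<lambda>D. card D \<le> d) w T) S \<mu> = 0"
proof -
  have "fhat n (subcube_ind D a) S \<mu> = 0" if "(D, a, b) \<in> set (dt_paths T)" "card D \<le> d" for D a b
  proof -
    have D: "D \<subseteq> {1..n}" and a: "\<forall>i\<in>D. a i = 1 \<or> a i = -1"
      using dt_paths_wf[OF T that(1)] by auto
    have "finite D" using D by (rule finite_subset) simp
    then have "\<not> S \<subseteq> D"
      using card_mono[of D S] S(2) that(2) by auto
    then show ?thesis using fhat_subcube_ind[OF mu D S(1) a] by simp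
  qed
  then have "(\<Sum>(D, a, b)\<leftarrow>filter (\<lambda>p. card (fst p) \<le> d) (dt_paths T). w b * fhat n (subcube_ind D a) S \<mu>)
      = (\<Sum>p\<leftarrow>filter (\<lambda>p. card (fst p) \<le> d) (dt_paths T). 0)"
    by (intro arg_cong[where f = sum_list] map_cong) auto
  then show ?thesis by (simp add: fhat_leaf_sum)
qed

lemma sum_paths_prod_Node:
  fixes q :: "nat \<Rightarrow> real \<Rightarrow> real"
  assumes "dt_wf n U (Node i t1 t2)"
  shows "(\<Sum>(D, a, b)\<leftarrow>filter (\<lambda>p. card (fst p) \<le> Suc k) (dt_paths (Node i t1 t2)). \<Prod>j\<in>D. q j (a j))
    = q i 1 * (\<Sum>(D, a, b)\<leftarrow>filter (\<lambda>p. card (fst p) \<le> k) (dt_paths t1). \<Prod>j\<in>D. q j (a j))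
    + q i (-1) * (\<Sum>(D, a, b)\<leftarrow>filter (\<lambda>p. card (fst p) \<le> k) (dt_paths t2). \<Prod>j\<in>D. q j (a j))"
proof -
  note fresh = dt_paths_Node_fresh[OF assms]
  have fresh': "\<forall>(D, a, b)\<in>set (filter (\<lambda>p. card (fst p) \<le> k) (dt_paths t1)). finite D \<and> i \<notin> D"
    "\<forall>(D, a, b)\<in>set (filter (\<lambda>p. card (fst p) \<le> k) (dt_paths t2)). finite D \<and> i \<notin> D"
    using fresh by auto
  show ?thesis
    unfolding dt_paths.simps filter_append map_append sum_list_append
      filter_card_extend_paths[OF fresh(1)] filter_card_extend_paths[OF fresh(2)]
    using sum_list_extend_paths[OF fresh'(1), where w = "\<lambda>_. 1"]
      sum_list_extend_paths[OF fresh'(2), where w = "\<lambda>_. 1"] by simp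
qed

lemma sum_paths_prod_le_pow:
  fixes q :: "nat \<Rightarrow> real \<Rightarrow> real"
  assumes "dt_wf n U T"
    and q: "\<forall>i\<in>{1..n}. 0 \<le> q i 1 \<and> 0 \<le> q i (-1) \<and> q i 1 + q i (-1) \<le> 2"
  shows "(\<Sum>(D, a, b)\<leftarrow>filter (\<lambda>p. card (fst p) \<le> k) (dt_paths T). \<Prod>i\<in>D. q i (a i)) \<le> 2 ^ k"
  using assms(1)
proof (induction T arbitrary: U k)
  case (Leaf b)
  then show ?case by simp
next
  case (Node i t1 t2)
  have wf: "dt_wf n (insert i U) t1" "dt_wf n (insert i U) t2" and "i \<in> {1..n}"
    using Node.prems by auto
  show ?case
  proof (cases k)
    case 0
    have "\<forall>(D, a, b)\<in>set (dt_paths (Node i t1 t2)). 0 < card D"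
      using dt_paths_Node_fresh[OF Node.prems] by (auto simp: extend_path_def)
    then have "filter (\<lambda>p. card (fst p) \<le> k) (dt_paths (Node i t1 t2)) = []"
      unfolding filter_empty_conv 0 by fastforce
    then show ?thesis by simp
  next
    case (Suc k')
    have "q i 1 * (\<Sum>(D, a, b)\<leftarrow>filter (\<lambda>p. card (fst p) \<le> k') (dt_paths t1). \<Prod>j\<in>D. q j (a j))
        + q i (-1) * (\<Sum>(D, a, b)\<leftarrow>filter (\<lambda>p. card (fst p) \<le> k') (dt_paths t2). \<Prod>j\<in>D. q j (a j))
        \<le> q i 1 * 2 ^ k' + q i (-1) * 2 ^ k'"
      using Node.IH(1)[OF wf(1)] Node.IH(2)[OF wf(2)] q \<open>i \<in> {1..n}\<close>
      by (intro add_mono mult_left_mono) auto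
    also have "\<dots> = (q i 1 + q i (-1)) * 2 ^ k'"
      by (simp add: algebra_simps)
    also have "\<dots> \<le> 2 ^ k"
      using q \<open>i \<in> {1..n}\<close> by (simp add: Suc)
    finally show ?thesis
      unfolding Suc sum_paths_prod_Node[OF Node.prems] .
  qed
qed

lemma sum_sum_list_swap:
  "(\<Sum>S\<in>A. \<Sum>p\<leftarrow>ps. F p S) = (\<Sum>p\<leftarrow>ps. \<Sum>S\<in>A. F p S)"
  by (induction ps) (simp_all add: sum.distrib)

lemma sum_abs_fhat_leaf_sum_shallow_le:
  assumes mu: "\<forall>i\<in>{1..n}. \<bar>\<mu> i\<bar> < 1" and T: "dt_wf n U T"
  shows "(\<Sum>S\<in>Pow {1..n}. \<bar>fhat n (leaf_sum (\<lambda>D. card D \<le> d) (\<lambda>b. b) T) S \<mu>\<bar>) \<le> 2 ^ d"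
proof -
  let ?ps = "filter (\<lambda>p. card (fst p) \<le> d) (dt_paths T)"
  have path: "D \<subseteq> {1..n}" "\<forall>i\<in>D. a i = 1 \<or> a i = -1" "b = 1 \<or> b = -1"
    if "(D, a, b) \<in> set ?ps" for D a b
    using that dt_paths_wf[OF T, of D a b] by auto
  have "(\<Sum>S\<in>Pow {1..n}. \<bar>fhat n (leaf_sum (\<lambda>D. card D \<le> d) (\<lambda>b. b) T) S \<mu>\<bar>)
      \<le> (\<Sum>S\<in>Pow {1..n}. \<Sum>(D, a, b)\<leftarrow>?ps. \<bar>fhat n (subcube_ind D a) S \<mu>\<bar>)"
  proof (rule sum_mono, unfold fhat_leaf_sum, rule order_trans[OF sum_list_abs],
      unfold map_map, rule sum_list_mono)
    fix S p assume "p \<in> set ?ps"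
    moreover obtain D a b where "p = (D, a, b)" by (cases p)
    ultimately have "p = (D, a, b)" "b = 1 \<or> b = -1" using path by auto
    then show "(abs \<circ> (\<lambda>(D, a, b). b * fhat n (subcube_ind D a) S \<mu>)) p
        \<le> (\<lambda>(D, a, b). \<bar>fhat n (subcube_ind D a) S \<mu>\<bar>) p"
      by auto
  qed
  also have "\<dots> = (\<Sum>(D, a, b)\<leftarrow>?ps. \<Prod>i\<in>D. (sqrt (1 - (\<mu> i)\<^sup>2) + 1 + a i * \<mu> i) / 2)"
    unfolding sum_sum_list_swap
    using path sum_abs_fhat_subcube_ind[OF mu] by (intro arg_cong[where f = sum_list] map_cong) auto
  also have "\<dots> \<le> 2 ^ d"
  proof (rule sum_paths_prod_le_pow[OF T], intro ballI)
    fix i assume "i \<in> {1..n}"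
    then have "\<bar>\<mu> i\<bar> < 1" using mu by blast
    from sqrt_one_minus_square_weights[OF this]
    show "0 \<le> (sqrt (1 - (\<mu> i)\<^sup>2) + 1 + 1 * \<mu> i) / 2 \<and>
        0 \<le> (sqrt (1 - (\<mu> i)\<^sup>2) + 1 + -1 * \<mu> i) / 2 \<and>
        (sqrt (1 - (\<mu> i)\<^sup>2) + 1 + 1 * \<mu> i) / 2 + (sqrt (1 - (\<mu> i)\<^sup>2) + 1 + -1 * \<mu> i) / 2 \<le> 2"
      by simp
  qed
  finally show ?thesis .
qed

section \<open>The deep part of a decision tree\<close>

lemma expect_leaf_sum_deep_le:
  assumes mu: "\<forall>i\<in>{1..n}. \<bar>\<mu> i\<bar> < 1" and c: "\<forall>i\<in>{1..n}. \<bar>\<mu> i\<bar> \<le> 1 - c" "0 \<le> c" "c \<le> 2"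
    and T: "dt_wf n U T"
  shows "expect_mu n \<mu> (leaf_sum (\<lambda>D. d < card D) (\<lambda>_. 1) T) \<le> dt_size T * (1 - c / 2) ^ d"
proof -
  let ?ps = "filter (\<lambda>p. d < card (fst p)) (dt_paths T)"
  have "expect_mu n \<mu> (leaf_sum (\<lambda>D. d < card D) (\<lambda>_. 1) T)
      = (\<Sum>(D, a, b)\<leftarrow>?ps. 1 * fhat n (subcube_ind D a) {} \<mu>)"
    unfolding fhat_empty[symmetric] by (rule fhat_leaf_sum)
  also have "\<dots> = (\<Sum>(D, a, b)\<leftarrow>?ps. expect_mu n \<mu> (subcube_ind D a))"
    by (simp add: fhat_empty)
  also have "\<dots> \<le> (\<Sum>p\<leftarrow>?ps. (1 - c / 2) ^ d)"
  proof (rule sum_list_mono)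
    fix p assume "p \<in> set ?ps"
    moreover obtain D a b where "p = (D, a, b)" by (cases p)
    ultimately have p: "p = (D, a, b)" "(D, a, b) \<in> set (dt_paths T)" "d < card D" by auto
    have D: "D \<subseteq> {1..n}" and a: "\<forall>i\<in>D. a i = 1 \<or> a i = -1"
      using dt_paths_wf[OF T p(2)] by auto
    have "expect_mu n \<mu> (subcube_ind D a) \<le> (1 - c / 2) ^ card D"
      using expect_subcube_ind_le[OF mu D a] c(1) D by blast
    also have "\<dots> \<le> (1 - c / 2) ^ d"
      using p(3) c(2,3) by (intro power_decreasing) auto
    finally show "(\<lambda>(D, a, b). expect_mu n \<mu> (subcube_ind D a)) p \<le> (1 - c / 2) ^ d"
      using p(1) by simp
  qed
  also have "\<dots> = length ?ps * (1 - c / 2) ^ d"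
    by (simp add: sum_list_triv)
  also have "\<dots> \<le> dt_size T * (1 - c / 2) ^ d"
    using c(3) length_filter_le[of _ "dt_paths T"] by (intro mult_right_mono) (auto simp: length_dt_paths)
  finally show ?thesis .
qed

lemma sum_fhat_sq_leaf_sum_deep_le:
  assumes mu: "\<forall>i\<in>{1..n}. \<bar>\<mu> i\<bar> < 1" and c: "\<forall>i\<in>{1..n}. \<bar>\<mu> i\<bar> \<le> 1 - c" "0 \<le> c" "c \<le> 2"
    and T: "dt_wf n U T"
  shows "(\<Sum>S\<in>Pow {1..n}. (fhat n (leaf_sum (\<lambda>D. d < card D) (\<lambda>b. b) T) S \<mu>)\<^sup>2)
    \<le> dt_size T * (1 - c / 2) ^ d"
proof -
  let ?r = "leaf_sum (\<lambda>D. d < card D) (\<lambda>b. b) T"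
  have "(\<Sum>S\<in>Pow {1..n}. (fhat n ?r S \<mu>)\<^sup>2) = expect_mu n \<mu> (\<lambda>x. ?r x * ?r x)"
    using parseval[OF mu] by (simp add: power2_eq_square)
  also have "\<dots> \<le> expect_mu n \<mu> (leaf_sum (\<lambda>D. d < card D) (\<lambda>_. 1) T)"
    using leaf_sum_sq_le[OF T] by (intro expect_mu_mono[OF mu]) (simp add: power2_eq_square)
  also have "\<dots> \<le> dt_size T * (1 - c / 2) ^ d"
    by (rule expect_leaf_sum_deep_le[OF mu c T])
  finally show ?thesis .
qed

lemma sum_sq_heavy_low_degree_ge:
  fixes F :: "'a set set" and fh gh rh :: "'a set \<Rightarrow> real"
  assumes "finite F" and split: "\<forall>S\<in>F. fh S = gh S + rh S"
    and norm: "(\<Sum>S\<in>F. (fh S)\<^sup>2) = 1" and rh: "(\<Sum>S\<in>F. (rh S)\<^sup>2) \<le> \<delta>"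
    and gh: "(\<Sum>S\<in>F. \<bar>gh S\<bar>) \<le> G" and low: "\<forall>S\<in>F. d < card S \<longrightarrow> gh S = 0"
    and "0 \<le> \<beta>"
  shows "(\<Sum>S\<in>{S\<in>F. \<beta> \<le> \<bar>fh S\<bar> \<and> card S \<le> d}. (fh S)\<^sup>2) \<ge> 1 - (\<delta> + 2 * \<beta> * G)"
proof -
  define B where "B = {S\<in>F. \<beta> \<le> \<bar>fh S\<bar> \<and> card S \<le> d}"
  have "(fh S)\<^sup>2 \<le> 2 * \<beta> * \<bar>gh S\<bar> + (rh S)\<^sup>2" if "S \<in> F - B" for S
  proof -
    have "fh S * gh S \<le> \<beta> * \<bar>gh S\<bar>"
    proof (cases "d < card S")
      case False
      with that have "\<bar>fh S\<bar> \<le> \<beta>" unfolding B_def by auto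
      have "fh S * gh S \<le> \<bar>fh S\<bar> * \<bar>gh S\<bar>"
        by (simp add: abs_mult[symmetric])
      also have "\<dots> \<le> \<beta> * \<bar>gh S\<bar>"
        using \<open>\<bar>fh S\<bar> \<le> \<beta>\<close> by (rule mult_right_mono) simp
      finally show ?thesis .
    qed (use that low in auto)
    moreover have "(fh S)\<^sup>2 = fh S * gh S + fh S * rh S" and "2 * (fh S * rh S) \<le> (fh S)\<^sup>2 + (rh S)\<^sup>2"
      using split that by (auto simp: power2_eq_square algebra_simps intro: sum_squares_bound[simplified])
    ultimately show ?thesis by linarith
  qed
  then have "(\<Sum>S\<in>F - B. (fh S)\<^sup>2) \<le> (\<Sum>S\<in>F - B. 2 * \<beta> * \<bar>gh S\<bar> + (rh S)\<^sup>2)"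
    by (rule sum_mono)
  also have "\<dots> \<le> 2 * \<beta> * (\<Sum>S\<in>F. \<bar>gh S\<bar>) + (\<Sum>S\<in>F. (rh S)\<^sup>2)"
    using \<open>finite F\<close> \<open>0 \<le> \<beta>\<close>
    by (auto simp: sum.distrib sum_distrib_left[symmetric] intro!: add_mono mult_left_mono sum_mono2)
  also have "\<dots> \<le> 2 * \<beta> * G + \<delta>"
    using gh rh \<open>0 \<le> \<beta>\<close> by (intro add_mono mult_left_mono) auto
  finally have "(\<Sum>S\<in>F - B. (fh S)\<^sup>2) \<le> \<delta> + 2 * \<beta> * G" by linarith
  moreover have "(\<Sum>S\<in>F. (fh S)\<^sup>2) = (\<Sum>S\<in>F - B. (fh S)\<^sup>2) + (\<Sum>S\<in>B. (fh S)\<^sup>2)"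
    using \<open>finite F\<close> by (intro sum.subset_diff) (auto simp: B_def)
  ultimately show ?thesis using norm unfolding B_def by linarith
qed

lemma sum_sq_heavy_fhat_dt_eval_ge:
  assumes mu: "\<forall>i\<in>{1..n}. \<bar>\<mu> i\<bar> < 1" and c: "\<forall>i\<in>{1..n}. \<bar>\<mu> i\<bar> \<le> 1 - c" "0 \<le> c" "c \<le> 2"
    and "0 \<le> \<beta>" and T: "dt_wf n U T"
  shows "(\<Sum>S\<in>{S\<in>Pow {1..n}. \<beta> \<le> \<bar>fhat n (dt_eval T) S \<mu>\<bar> \<and> card S \<le> d}. (fhat n (dt_eval T) S \<mu>)\<^sup>2)
    \<ge> 1 - (dt_size T * (1 - c / 2) ^ d + 2 * \<beta> * 2 ^ d)"
proof (rule sum_sq_heavy_low_degree_ge)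
  let ?g = "leaf_sum (\<lambda>D. card D \<le> d) (\<lambda>b. b) T" and ?r = "leaf_sum (\<lambda>D. d < card D) (\<lambda>b. b) T"
  show "\<forall>S\<in>Pow {1..n}. fhat n (dt_eval T) S \<mu> = fhat n ?g S \<mu> + fhat n ?r S \<mu>"
    using fhat_dt_eval_split[OF T, where P = "\<lambda>D. card D \<le> d"] by (simp add: not_le)
  show "(\<Sum>S\<in>Pow {1..n}. (fhat n (dt_eval T) S \<mu>)\<^sup>2) = 1"
    using dt_eval_wf[OF T] by (intro sum_fhat_sq_boolean[OF mu]) blast
  show "(\<Sum>S\<in>Pow {1..n}. (fhat n ?r S \<mu>)\<^sup>2) \<le> dt_size T * (1 - c / 2) ^ d"
    by (rule sum_fhat_sq_leaf_sum_deep_le[OF mu c T])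
  show "(\<Sum>S\<in>Pow {1..n}. \<bar>fhat n ?g S \<mu>\<bar>) \<le> 2 ^ d"
    by (rule sum_abs_fhat_leaf_sum_shallow_le[OF mu T])
  show "\<forall>S\<in>Pow {1..n}. d < card S \<longrightarrow> fhat n ?g S \<mu> = 0"
    using fhat_leaf_sum_shallow_eq_0[OF mu T] by blast
qed (use \<open>0 \<le> \<beta>\<close> in auto)

theorem lemma4:
  fixes n d s :: nat and c \<beta> :: real and \<mu> :: "nat \<Rightarrow> real"
    and f :: "(nat \<Rightarrow> real) \<Rightarrow> real"
  assumes "0 \<le> c" and "c \<le> 1/2"
    and "\<forall>i\<in>{1..n}. -1 + c \<le> \<mu> i \<and> \<mu> i \<le> 1 - c"
    and "\<beta> > 0"
    and "\<forall>x\<in>cube n. f x \<in> {-1, 1}"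
    and "computed_by_dt_of_size n f s"
  shows "(\<Sum>S\<in>{S. S \<subseteq> {1..n} \<and> \<bar>fhat n f S \<mu>\<bar> \<ge> \<beta> \<and> card S \<le> d}.
            (fhat n f S \<mu>)\<^sup>2)
         \<ge> 1 - (4 * (1 - c/2) ^ d * real s + 2 ^ (d + 2) * \<beta>)"
proof -
  obtain T where T: "dt_wf n {} T" "dt_size T = s" "\<forall>x\<in>cube n. f x = dt_eval T x"
    using assms(6) unfolding computed_by_dt_of_size_def by blast
  have fhat_f: "fhat n f S \<mu> = fhat n (dt_eval T) S \<mu>" for S
    using T(3) by (intro fhat_cong) simp
  show ?thesis
  proof (cases "c = 0")
    case True
    \<comment> \<open>Some \<open>\<mu> i\<close> may then be \<open>\<plusminus>1\<close>, but the bound is vacuous since \<open>s \<ge> 1\<close>.\<close>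
    have "1 - (4 * (1 - c/2) ^ d * real s + 2 ^ (d + 2) * \<beta>) = 1 - 4 * real s - 2 ^ (d + 2) * \<beta>"
      using True by simp
    also have "\<dots> \<le> 0"
      using dt_size_pos[of T] T(2) mult_pos_pos[OF zero_less_power[of 2 "d + 2"] assms(4)] by linarith
    finally show ?thesis by (rule order_trans) (simp add: sum_nonneg)
  next
    case False
    with assms(1-4) have "\<forall>i\<in>{1..n}. \<bar>\<mu> i\<bar> < 1" "\<forall>i\<in>{1..n}. \<bar>\<mu> i\<bar> \<le> 1 - c" "0 \<le> c" "c \<le> 2" "0 \<le> \<beta>"
      by (auto simp: abs_le_iff abs_less_iff)
    from sum_sq_heavy_fhat_dt_eval_ge[OF this T(1)]
    have "1 - (real s * (1 - c/2) ^ d + 2 * \<beta> * 2 ^ d) \<le>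
        (\<Sum>S\<in>{S. S \<subseteq> {1..n} \<and> \<bar>fhat n f S \<mu>\<bar> \<ge> \<beta> \<and> card S \<le> d}. (fhat n f S \<mu>)\<^sup>2)"
      unfolding fhat_f T(2) by simp
    moreover have "real s * (1 - c/2) ^ d + 2 * \<beta> * 2 ^ d \<le> 4 * (1 - c/2) ^ d * real s + 2 ^ (d + 2) * \<beta>"
      using assms(2,4) by (simp add: power_add)
    ultimately show ?thesis by linarith
  qed
qed

end
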